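(* In the standing setup, let $\alpha=(\alpha_n)$ be a subsequence of $(p_n)$ with $\sum_{n=0}^\infty \ell_n^\alpha<+\infty$, let $\beta_n=\alpha_0\cdots\alpha_n$ and $r_n=B_\infty(\beta_n^{-1}i,\,i)$. Then $(r_n)_n$ converges to a real number $r_\alpha$, and $|r_n|\le\sum_{i=0}^\infty\ell_i^\alpha$ for all $n\ge0$; hence $|r_\alpha|\le\sum_{i=0}^\infty\ell_i^\alpha$.
   Context: Standing setup: $\mathbb H$ is the upper half-plane with distance $d$, $\partial\mathbb H=\mathbb R\cup\{\infty\}$; for $v\in T^1\mathbb H$, $v(t)$ is the unit-speed geodesic with initial vector $v$, $v(+\infty)$ its forward endpoint. Busemann function: $B_\xi(x,y)=\lim_{t\to\infty}(d(x,c(t))-d(y,c(t)))$ for a geodesic ray $c$ converging to $\xi$. For a horocycle $\tilde H$ and a parabolic isometry $p$ preserving it, $\ell(\tilde H,p)$ is the horocyclic arc length between $x$ and $px$ ($x\in\tilde H$); positive orientation is that of an arc-length parametrization with $p\tilde H(s)=\tilde H(s+\ell(\tilde H,p))$; $\tilde u$ is tangent to the oriented pair $(\tilde H,p)$ if $\tilde u(\mathbb R^+)$ is tangent to $\tilde H$ at $\tilde u(t_0)=\tilde H(s_0)$, $t_0\ge0$, with $\frac{d\tilde u}{dt}(t_0)=\frac{d\tilde H}{ds}(s_0)$ for a positively oriented parametrization. $\Gamma$ is a torsion-free Fuchsian group, $S=\Gamma\backslash\mathbb H$ has at least one cusp, $u\in T^1S$ is cusp-recurrent with lift $\tilde u$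 normalized so that $\tilde u(0)=i$, $\tilde u(+\infty)=\infty$. $(\tilde H_n,p_n)_{n\in\mathbb N}$: $p_n\in\Gamma$ parabolic with fixed point $x_n\in\mathbb R$, $\tilde H_n$ horocycle centered at $x_n$, $\tilde u$ tangent to the oriented pair $(\tilde H_n,p_n)$ at $\tilde u(t_n)$, $(t_n)$ nonnegative increasing to $+\infty$, $x_n$ positive distinct increasing to $+\infty$, horoballs bounded by the $\tilde H_n$ pairwise disjoint, $\ell(\tilde H_n,p_n)\to0$. A subsequence $\alpha$ is $\alpha_n=p_{k_n}$ ($k_n$ increasing), $\ell_n^\alpha=\ell(\tilde H_{k_n},p_{k_n})$. *)

theory Defs
  imports "HOL-Analysis.Analysis"
begin

type_synonym mat2 = "real^2^2"

definition uhp :: "complex set" where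
  "uhp = {z. Im z > 0}"

definition hdist :: "complex \<Rightarrow> complex \<Rightarrow> real" where
  "hdist z w = arcosh (1 + (cmod (z - w))^2 / (2 * Im z * Im w))"

definition busemann_inf :: "complex \<Rightarrow> complex \<Rightarrow> real" where
  "busemann_inf z w =
     Lim at_top (\<lambda>t::real. hdist z (\<i> * of_real (exp t)) - hdist w (\<i> * of_real (exp t)))"

definition moeb :: "mat2 \<Rightarrow> complex \<Rightarrow> complex" where
  "moeb A z = (of_real (A$1$1) * z + of_real (A$1$2)) / (of_real (A$2$1) * z + of_real (A$2$2))"

primrec mpow :: "mat2 \<Rightarrow> nat \<Rightarrow> mat2" where
  "mpow A 0 = mat 1"
| "mpow A (Suc n) = mpow A n ** A"

primrec mprod_upto :: "(nat \<Rightarrow> mat2) \<Rightarrow> nat \<Rightarrow> mat2" where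
  "mprod_upto f 0 = f 0"
| "mprod_upto f (Suc n) = mprod_upto f n ** f (Suc n)"

definition is_pm_id :: "mat2 \<Rightarrow> bool" where
  "is_pm_id A \<longleftrightarrow> A = mat 1 \<or> A = - mat 1"

definition parabolic :: "mat2 \<Rightarrow> bool" where
  "parabolic A \<longleftrightarrow> det A = 1 \<and> \<not> is_pm_id A \<and> \<bar>trace A\<bar> = 2"

definition fixes_real :: "mat2 \<Rightarrow> real \<Rightarrow> bool" where
  "fixes_real A x \<longleftrightarrow> A$2$1 * x + A$2$2 \<noteq> 0 \<and> moeb A (of_real x) = of_real x"

text \<open>A torsion-free Fuchsian group, represented by its full preimage G in SL(2,R)
  (so G contains -1 and is a discrete subgroup of SL(2,R)).\<close>
definition torsion_free_fuchsian :: "mat2 set \<Rightarrow> bool" where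
  "torsion_free_fuchsian G \<longleftrightarrow>
     (\<forall>A\<in>G. det A = 1) \<and> mat 1 \<in> G \<and> - mat 1 \<in> G \<and>
     (\<forall>A\<in>G. \<forall>B\<in>G. A ** B \<in> G) \<and> (\<forall>A\<in>G. matrix_inv A \<in> G) \<and>
     (\<forall>A\<in>G. \<exists>e>0. \<forall>B\<in>G. dist B A < e \<longrightarrow> B = A) \<and>
     (\<forall>A\<in>G. \<forall>n>0. is_pm_id (mpow A n) \<longrightarrow> is_pm_id A)"

definition horocycle :: "real \<Rightarrow> real \<Rightarrow> complex set" where
  "horocycle x h = {z. Im z > 0 \<and> cmod (z - (of_real x + \<i> * of_real (h/2))) = h/2}"

definition horoball :: "real \<Rightarrow> real \<Rightarrow> complex set" where
  "horoball x h = {z. Im z > 0 \<and> cmod (z - (of_real x + \<i> * of_real (h/2))) < h/2}"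

definition arclength_param :: "complex set \<Rightarrow> (real \<Rightarrow> complex) \<Rightarrow> bool" where
  "arclength_param C H \<longleftrightarrow> bij_betw H UNIV C \<and>
     (\<forall>s. \<exists>v. (H has_vector_derivative v) (at s) \<and> cmod v = Im (H s))"

definition shift_param :: "complex set \<Rightarrow> mat2 \<Rightarrow> real \<Rightarrow> (real \<Rightarrow> complex) \<Rightarrow> bool" where
  "shift_param C p l H \<longleftrightarrow> arclength_param C H \<and> (\<forall>s. moeb p (H s) = H (s + l))"

text \<open>Horocyclic length l(C,p): the arc length between z and pz; the arc-length
  parametrizations H with p H(s) = H(s + l(C,p)) are the positively oriented ones.\<close>
definition horo_length :: "complex set \<Rightarrow> mat2 \<Rightarrow> real" where
  "horo_length C p = (THE l. l \<ge> 0 \<and> (\<exists>H. shift_param C p l H))"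

text \<open>Normalized lift of u: the unit-speed geodesic with u(0) = i, u(+\<infinity>) = \<infinity>.\<close>
definition u_lift :: "real \<Rightarrow> complex" where
  "u_lift t = \<i> * of_real (exp t)"

definition tangent_at :: "real \<Rightarrow> complex set \<Rightarrow> mat2 \<Rightarrow> bool" where
  "tangent_at t0 C p \<longleftrightarrow> t0 \<ge> 0 \<and>
     (\<exists>H s0 v. shift_param C p (horo_length C p) H \<and> H s0 = u_lift t0 \<and>
        (u_lift has_vector_derivative v) (at t0) \<and> (H has_vector_derivative v) (at s0))"

end

theory Submission
  imports Defs
begin

text \<open>
  Conjugation by \<open>z \<mapsto> -1/(z - x\<^sub>n)\<close> turns the horocycle centred at \<open>x\<^sub>n\<close> into a
  horizontal line and the parabolic \<open>p\<^sub>n\<close> into a translation by some \<open>-c\<^sub>n\<close>. Tangency of the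
  geodesic \<open>t \<mapsto> i e\<^sup>t\<close> at time \<open>t\<^sub>n \<ge> 0\<close> then forces \<open>x\<^sub>n = e\<^sup>t\<^sup>n \<ge> 1\<close>, \<open>c\<^sub>n > 0\<close> and
  \<open>l(H\<^sub>n, p\<^sub>n) = 2 c\<^sub>n x\<^sub>n\<close>.
  Since \<open>B\<^sub>\<infinity>(z, i) = -ln (Im z)\<close>, \<open>r\<^sub>n\<close> is minus the log-height of the orbit point
  \<open>\<beta>\<^sub>n\<^sup>-\<^sup>1 i\<close>, obtained from \<open>i\<close> by applying \<open>\<alpha>\<^sub>0\<^sup>-\<^sup>1, \<alpha>\<^sub>1\<^sup>-\<^sup>1, \<dots>\<close> in turn. Since the \<open>x\<^sub>n\<close>
  increase, the orbit stays in the region \<open>0 \<le> Re z \<le> x\<^sub>k\<^sub>n, Im z \<le> 1\<close>, where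
  \<open>\<alpha>\<^sub>n\<^sup>-\<^sup>1\<close> divides the height by a factor between \<open>1\<close> and \<open>exp l\<^sub>n\<^sup>\<alpha>\<close>. So \<open>r\<^sub>n\<close> increases
  and \<open>0 \<le> r\<^sub>n \<le> \<Sum>\<^sub>i\<^sub>\<le>\<^sub>n l\<^sub>i\<^sup>\<alpha>\<close>, whence convergence and both bounds.
\<close>

section \<open>Real 2x2 matrices and the Moebius action\<close>

definition adj2 :: "mat2 \<Rightarrow> mat2" where
  "adj2 A = (\<chi> i j. if i = 1 then (if j = 1 then A$2$2 else - A$1$2)
                              else (if j = 1 then - A$2$1 else A$1$1))"

lemma adj2_nth [simp]:
  "adj2 A $1$1 = A$2$2" "adj2 A $1$2 = - A$1$2" "adj2 A $2$1 = - A$2$1" "adj2 A $2$2 = A$1$1"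
  by (simp_all add: adj2_def)

lemma mat2_mult_nth [simp]: "((A::mat2) ** B)$i$j = A$i$1 * B$1$j + A$i$2 * B$2$j"
  by (simp add: matrix_matrix_mult_def sum_2)

lemma mat2_one_nth [simp]:
  "(mat 1 :: mat2)$1$1 = 1" "(mat 1 :: mat2)$1$2 = 0" "(mat 1 :: mat2)$2$1 = 0" "(mat 1 :: mat2)$2$2 = 1"
  by (simp_all add: mat_def)

lemma mat2_eq_iff: "(A::mat2) = B \<longleftrightarrow> A$1$1 = B$1$1 \<and> A$1$2 = B$1$2 \<and> A$2$1 = B$2$1 \<and> A$2$2 = B$2$2"
  by (auto simp: vec_eq_iff forall_2)

lemma det_adj2: "det (adj2 A) = det A"
  by (simp add: det_2)

lemma adj2_mult: "adj2 ((A::mat2) ** B) = adj2 B ** adj2 A"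
  by (simp add: mat2_eq_iff algebra_simps)

lemma matrix_inv_eq_adj2:
  assumes "det (A::mat2) = 1"
  shows "matrix_inv A = adj2 A"
proof -
  have adj: "A ** adj2 A = mat 1 \<and> adj2 A ** A = mat 1"
    using assms by (simp add: mat2_eq_iff det_2 algebra_simps)
  let ?B = "matrix_inv A"
  have B: "A ** ?B = mat 1 \<and> ?B ** A = mat 1"
    unfolding matrix_inv_def by (rule someI[of _ "adj2 A"]) (rule adj)
  have "?B = ?B ** (A ** adj2 A)" using adj by simp
  also have "\<dots> = (?B ** A) ** adj2 A" by (simp add: matrix_mul_assoc)
  also have "\<dots> = adj2 A" using B by simp
  finally show ?thesis .
qed

lemma det_mprod_upto: "(\<And>j. det (f j) = 1) \<Longrightarrow> det (mprod_upto f n) = 1"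
  by (induction n) (simp_all add: det_mul)

lemma moeb_denominator_nonzero:
  assumes "Im z > 0" "det (A::mat2) \<noteq> 0"
  shows "of_real (A$2$1) * z + of_real (A$2$2) \<noteq> 0"
proof
  assume den: "of_real (A$2$1) * z + of_real (A$2$2) = 0"
  then have "Im (of_real (A$2$1) * z + of_real (A$2$2)) = 0" by simp
  then have "A$2$1 = 0" using assms(1) by simp
  moreover from this have "A$2$2 = 0" using den by simp
  ultimately show False using assms(2) by (simp add: det_2)
qed

lemma Im_moeb_pos:
  assumes "Im z > 0" "det A > 0"
  shows "Im (moeb A z) > 0"
proof -
  have "Im (moeb A z) = det A * Im z / (cmod (of_real (A$2$1) * z + of_real (A$2$2)))\<^sup>2"
    unfolding moeb_def Im_divide det_2 cmod_power2 by (simp add: algebra_simps power2_eq_square)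
  moreover have "of_real (A$2$1) * z + of_real (A$2$2) \<noteq> 0"
    using moeb_denominator_nonzero assms by force
  ultimately show ?thesis using assms by simp
qed

lemma moeb_mult:
  assumes z: "Im z > 0" and A: "det A \<noteq> 0" and B: "det B > 0"
  shows "moeb (A ** B) z = moeb A (moeb B z)"
proof -
  have dB: "of_real (B$2$1) * z + of_real (B$2$2) \<noteq> 0"
    using moeb_denominator_nonzero z B by force
  have fraction: "(a * (N/D) + b) / (c * (N/D) + e) = (a*N + b*D) / (c*N + e*D)"
    if "D \<noteq> 0" for a b c e N D :: complex
  proof -
    have "a * (N/D) + b = (a*N + b*D) / D" "c * (N/D) + e = (c*N + e*D) / D"
      using that by (simp_all add: field_simps)
    then show ?thesis using that by simp
  qed
  show ?thesis
    unfolding moeb_def fraction[OF dB] by (simp add: algebra_simps)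
qed

lemma moeb_inv_mprod_upto:
  assumes det: "\<And>j. det (f j) = 1" and z: "Im z > 0"
  shows "Im (moeb (matrix_inv (mprod_upto f n)) z) > 0"
    and "moeb (matrix_inv (mprod_upto f (Suc n))) z
           = moeb (matrix_inv (f (Suc n))) (moeb (matrix_inv (mprod_upto f n)) z)"
proof -
  have "det (mprod_upto f n) = 1" by (rule det_mprod_upto[OF det])
  then show "Im (moeb (matrix_inv (mprod_upto f n)) z) > 0"
    using z by (simp add: matrix_inv_eq_adj2 det_adj2 Im_moeb_pos)
  show "moeb (matrix_inv (mprod_upto f (Suc n))) z
          = moeb (matrix_inv (f (Suc n))) (moeb (matrix_inv (mprod_upto f n)) z)"
    using det[of "Suc n"] det_mprod_upto[of f, OF det] z
    by (simp add: matrix_inv_eq_adj2 adj2_mult moeb_mult det_adj2 det_mul)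
qed

section \<open>Parabolic elements\<close>

text \<open>The conjugate of \<open>w \<mapsto> w - c\<close> under \<open>z \<mapsto> -1/(z - x)\<close>.\<close>
definition parabolic_map :: "real \<Rightarrow> real \<Rightarrow> complex \<Rightarrow> complex" where
  "parabolic_map x c z = of_real x + (z - of_real x) / (of_real c * (z - of_real x) + 1)"

lemma parabolic_entries:
  assumes par: "parabolic A" and fx: "fixes_real A x"
  obtains s d where "s\<^sup>2 = 1" "d \<noteq> 0" "A$1$1 = s + x * d" "A$1$2 = - x\<^sup>2 * d"
    "A$2$1 = d" "A$2$2 = s - x * d"
proof -
  define a b d e where "a = A$1$1" and "b = A$1$2" and "d = A$2$1" and "e = A$2$2"
  have v0: "d*x + e \<noteq> 0" using fx by (simp add: fixes_real_def d_def e_def)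
  have "complex_of_real ((a*x + b) / (d*x + e)) = of_real x"
    using fx by (simp add: fixes_real_def moeb_def a_def b_def d_def e_def)
  then have "(a*x + b) / (d*x + e) = x" using of_real_eq_iff by blast
  then have bx: "a*x + b = x * (d*x + e)" using v0 by (simp add: field_simps)
  have det: "a*e - b*d = 1" using par by (simp add: parabolic_def det_2 a_def b_def d_def e_def)
  have "\<bar>a + e\<bar> = 2" using par by (simp add: parabolic_def trace_def sum_2 a_def e_def)
  then have tr: "(a + e)\<^sup>2 = 4" using power2_abs[of "a + e"] by simp
  txt \<open>\<open>u\<close> and \<open>v\<close> are the diagonal entries of \<open>A\<close> conjugated by the translation moving
    \<open>x\<close> to \<open>0\<close>; \<open>u v = det A = 1\<close> and \<open>(u + v)\<^sup>2 = (tr A)\<^sup>2 = 4\<close> force \<open>u = v = \<plusminus>1\<close>.\<close>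
  define u v where "u = a - x*d" and "v = d*x + e"
  have b: "b = x * v - a * x" using bx by (simp add: v_def)
  have uv: "u * v = 1" using det unfolding u_def v_def b by (simp add: algebra_simps)
  have "(u - v)\<^sup>2 = (u + v)\<^sup>2 - 4 * (u * v)" by (simp add: power2_eq_square algebra_simps)
  also have "(u + v)\<^sup>2 = 4" using tr by (simp add: u_def v_def)
  finally have "u = v" using uv by simp
  then have s2: "v\<^sup>2 = 1" using uv by (simp add: power2_eq_square)
  have "d \<noteq> 0"
  proof
    assume d0: "d = 0"
    then have "a = v" "e = v" "b = 0" using \<open>u = v\<close> b by (auto simp: u_def v_def)
    moreover have "v = 1 \<or> v = -1" using s2 by (simp add: power2_eq_1_iff)
    ultimately have "A = mat 1 \<or> A = - mat 1"
      using d0 unfolding mat2_eq_iff a_def b_def d_def e_def by auto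
    then show False using par by (simp add: parabolic_def is_pm_id_def)
  qed
  moreover have "e = v - x*d" "a = v + x*d" using \<open>u = v\<close> by (simp_all add: u_def v_def)
  ultimately show thesis
    using that[of v d] s2 b unfolding a_def b_def d_def e_def
    by (simp add: power2_eq_square algebra_simps)
qed

lemma moeb_eq_parabolic_map:
  assumes s2: "s\<^sup>2 = 1" and z: "Im z > 0"
    and M: "M$1$1 = s + x*d" "M$1$2 = - x\<^sup>2 * d" "M$2$1 = d" "M$2$2 = s - x*d"
  shows "moeb M z = parabolic_map x (s*d) z"
proof -
  define \<zeta> S X D where "\<zeta> = z - of_real x" and "S = complex_of_real s"
    and "X = complex_of_real x" and "D = complex_of_real d"
  have SS: "S * S = 1" using s2 by (simp add: S_def power2_eq_square flip: of_real_mult)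
  have "D * \<zeta> + S \<noteq> 0"
  proof
    assume den: "D * \<zeta> + S = 0"
    then have "Im (D * \<zeta> + S) = 0" by simp
    then have "d = 0" using z by (simp add: \<zeta>_def D_def S_def)
    then show False using den SS by (simp add: D_def)
  qed
  have "moeb M z = (X * (D * \<zeta> + S) + S * \<zeta>) / (D * \<zeta> + S)"
    unfolding moeb_def M \<zeta>_def S_def X_def D_def by (simp add: algebra_simps power2_eq_square)
  also have "\<dots> = X + S * \<zeta> / (D * \<zeta> + S)"
    using \<open>D * \<zeta> + S \<noteq> 0\<close> by (simp add: field_simps)
  also have "D * \<zeta> + S = S * (S * D * \<zeta> + 1)"
    using SS by (simp add: algebra_simps)
  also have "S * \<zeta> / (S * (S * D * \<zeta> + 1)) = \<zeta> / (S * D * \<zeta> + 1)"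
    using SS by (metis mult_divide_mult_cancel_left_if mult_zero_left zero_neq_one)
  finally show ?thesis by (simp add: parabolic_map_def \<zeta>_def S_def X_def D_def)
qed

lemma parabolic_normal_form:
  assumes "parabolic A" "fixes_real A x"
  obtains c where "c \<noteq> 0"
    "\<And>z. Im z > 0 \<Longrightarrow> moeb A z = parabolic_map x c z"
    "\<And>z. Im z > 0 \<Longrightarrow> moeb (adj2 A) z = parabolic_map x (- c) z"
proof -
  obtain s d where s: "s\<^sup>2 = 1" and "d \<noteq> 0" and A: "A$1$1 = s + x * d" "A$1$2 = - x\<^sup>2 * d"
    "A$2$1 = d" "A$2$2 = s - x * d"
    using parabolic_entries[OF assms] by blast
  show thesis
  proof (rule that[of "s * d"])
    show "s * d \<noteq> 0" using s \<open>d \<noteq> 0\<close> by auto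
    show "moeb A z = parabolic_map x (s * d) z" if "Im z > 0" for z
      by (rule moeb_eq_parabolic_map[OF s that A])
    show "moeb (adj2 A) z = parabolic_map x (- (s * d)) z" if "Im z > 0" for z
      using moeb_eq_parabolic_map[OF s that, of "adj2 A" x "- d"] A by (simp add: algebra_simps)
  qed
qed

lemma inversion_parabolic_map:
  assumes "Im z > 0"
  shows "- 1 / (parabolic_map x c z - of_real x) = - 1 / (z - of_real x) - of_real c"
proof -
  define \<zeta> where "\<zeta> = z - of_real x"
  have "Im \<zeta> > 0" using assms by (simp add: \<zeta>_def)
  then have "\<zeta> \<noteq> 0" "of_real c * \<zeta> + 1 \<noteq> 0"
    by (auto simp: complex_eq_iff)
  then show ?thesis
    unfolding parabolic_map_def \<zeta>_def[symmetric] by (simp add: field_simps)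
qed

section \<open>Horocycles and their arc-length parametrizations\<close>

lemma derivative_pm_no_sign_change:
  fixes f f' :: "real \<Rightarrow> real"
  assumes der: "\<And>s. DERIV f s :> f' s" and a: "a > 0"
    and pm: "\<And>s. f' s = a \<or> f' s = - a"
    and s12: "s1 < s2" and f1: "f' s1 = a" and f2: "f' s2 = - a"
  shows False
proof -
  have "\<forall>x. s1 \<le> x \<and> x \<le> s2 \<longrightarrow> isCont f x" using der DERIV_isCont by blast
  then obtain M m where M: "\<forall>x. s1 \<le> x \<and> x \<le> s2 \<longrightarrow> f x \<le> M"
    and m: "s1 \<le> m" "m \<le> s2" "f m = M"
    using isCont_eq_Ub[OF less_imp_le[OF s12]] by blast
  obtain d1 where d1: "d1 > 0" "\<forall>h>0. h < d1 \<longrightarrow> f s1 < f (s1 + h)"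
    using DERIV_pos_inc_right[OF der[of s1]] f1 a by auto
  obtain d2 where d2: "d2 > 0" "\<forall>h>0. h < d2 \<longrightarrow> f s2 < f (s2 - h)"
    using DERIV_neg_dec_left[OF der[of s2]] f2 a by auto
  have "m \<noteq> s1"
  proof
    assume "m = s1"
    define h where "h = min d1 (s2 - s1) / 2"
    have "h > 0" "h < d1" "s1 + h \<le> s2" unfolding h_def using d1 s12 by (auto simp: min_def field_simps)
    then have "f s1 < f (s1 + h)" "f (s1 + h) \<le> M" using d1 M s12 by auto
    then show False using m \<open>m = s1\<close> by auto
  qed
  moreover have "m \<noteq> s2"
  proof
    assume "m = s2"
    define h where "h = min d2 (s2 - s1) / 2"
    have "h > 0" "h < d2" "s1 \<le> s2 - h" unfolding h_def using d2 s12 by (auto simp: min_def field_simps)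
    then have "f s2 < f (s2 - h)" "f (s2 - h) \<le> M" using d2 M s12 by auto
    then show False using m \<open>m = s2\<close> by auto
  qed
  ultimately have "s1 < m" "m < s2" using m by auto
  then have "f' m = 0"
    by (intro DERIV_local_max[OF der[of m], of "min (m - s1) (s2 - m)"])
       (use M m in \<open>auto simp: abs_if\<close>)
  then show False using pm[of m] a by auto
qed

text \<open>A special case of Darboux's theorem.\<close>
lemma derivative_pm_constant:
  fixes f f' :: "real \<Rightarrow> real"
  assumes der: "\<And>s. DERIV f s :> f' s" and a: "a > 0"
    and pm: "\<And>s. f' s = a \<or> f' s = - a"
  shows "(\<forall>s. f' s = a) \<or> (\<forall>s. f' s = - a)"
proof (rule ccontr)
  assume "\<not> ?thesis"
  then obtain s1 s2 where f1: "f' s1 = a" and f2: "f' s2 = - a" using pm by metis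
  have "s1 \<noteq> s2" using f1 f2 a by auto
  then consider "s1 < s2" | "s2 < s1" by linarith
  then show False
  proof cases
    case 1
    then show False using derivative_pm_no_sign_change[OF der a pm _ f1 f2] by blast
  next
    case 2
    have der': "\<And>s. DERIV (\<lambda>s. - f s) s :> - f' s" using der by (auto intro: derivative_eq_intros)
    have pm': "\<And>s. - f' s = a \<or> - f' s = - a" using pm by (metis minus_minus)
    show False using derivative_pm_no_sign_change[OF der' a pm' 2] f1 f2 by simp
  qed
qed

lemma has_real_derivative_Re:
  "(g has_vector_derivative G) (at s) \<Longrightarrow> ((\<lambda>s. Re (g s)) has_real_derivative Re G) (at s)"
  unfolding has_vector_derivative_def has_field_derivative_def
  by (drule has_derivative_Re) (simp add: mult_commute_abs)

lemma has_real_derivative_Im: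
  "(g has_vector_derivative G) (at s) \<Longrightarrow> ((\<lambda>s. Im (g s)) has_real_derivative Im G) (at s)"
  unfolding has_vector_derivative_def has_field_derivative_def
  by (drule has_derivative_Im) (simp add: mult_commute_abs)

lemma has_vector_derivative_inversion:
  fixes H :: "real \<Rightarrow> complex"
  assumes "(H has_vector_derivative v) (at s)" "H s \<noteq> X"
  shows "((\<lambda>s. - 1 / (H s - X)) has_vector_derivative v / (H s - X)\<^sup>2) (at s)"
proof -
  have "((\<lambda>w. - 1 / (w - X)) has_field_derivative 1 / (H s - X)\<^sup>2) (at (H s))"
    using assms(2) by (auto intro!: derivative_eq_intros simp: field_simps power2_eq_square)
  from field_vector_diff_chain_at[OF assms(1) this] show ?thesis
    by (simp add: o_def)
qed

lemma arclength_param_mem: "arclength_param C H \<Longrightarrow> H s \<in> C"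
  unfolding arclength_param_def by (metis bij_betw_apply UNIV_I)

lemma horocycle_Im_pos: "z \<in> horocycle x h \<Longrightarrow> Im z > 0"
  by (simp add: horocycle_def)

lemma horocycle_circle_eq:
  assumes "z \<in> horocycle x h"
  shows "(Re z - x)\<^sup>2 + (Im z)\<^sup>2 = h * Im z"
proof -
  have "cmod (z - (of_real x + \<i> * of_real (h/2))) = h/2" using assms by (simp add: horocycle_def)
  then have "(cmod (z - (of_real x + \<i> * of_real (h/2))))\<^sup>2 = (h/2)\<^sup>2" by metis
  then have "(Re z - x)\<^sup>2 + (Im z - h/2)\<^sup>2 = (h/2)\<^sup>2" by (simp add: cmod_power2)
  then show ?thesis by (simp add: power2_eq_square algebra_simps)
qed

lemma Im_inversion_horocycle:
  assumes "h > 0" "z \<in> horocycle x h"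
  shows "Im (- 1 / (z - of_real x)) = 1 / h"
proof -
  have "Im (- 1 / (z - of_real x)) = Im z / ((Re z - x)\<^sup>2 + (Im z)\<^sup>2)"
    by (simp add: Im_divide power2_eq_square)
  also have "\<dots> = 1 / h"
    using horocycle_circle_eq[OF assms(2)] assms by (simp add: horocycle_def)
  finally show ?thesis .
qed

lemma horocycle_arclength_inversion_derivative:
  assumes h: "h > 0" and H: "arclength_param (horocycle x h) H"
    and w: "(H has_vector_derivative w) (at s)"
  shows "Im (w / (H s - of_real x)\<^sup>2) = 0" "\<bar>Re (w / (H s - of_real x)\<^sup>2)\<bar> = 1 / h"
proof -
  have onC: "\<And>s. H s \<in> horocycle x h" using arclength_param_mem[OF H] .
  have ImH: "\<And>s. Im (H s) > 0" using horocycle_Im_pos[OF onC] .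
  then have Hx: "H s \<noteq> of_real x" by (metis Im_complex_of_real less_irrefl)
  obtain v where v: "(H has_vector_derivative v) (at s)" "cmod v = Im (H s)"
    using H unfolding arclength_param_def by blast
  have "v = w" using vector_derivative_unique_at[OF v(1) w] .
  have "((\<lambda>s. Im (- 1 / (H s - of_real x))) has_real_derivative Im (w / (H s - of_real x)\<^sup>2)) (at s)"
    by (rule has_real_derivative_Im[OF has_vector_derivative_inversion[OF w Hx]])
  moreover have "((\<lambda>s. Im (- 1 / (H s - of_real x))) has_real_derivative 0) (at s)"
    using Im_inversion_horocycle[OF h onC] by simp
  ultimately show Im0: "Im (w / (H s - of_real x)\<^sup>2) = 0" by (rule DERIV_unique)
  have "(cmod (H s - of_real x))\<^sup>2 = h * Im (H s)"
    using horocycle_circle_eq[OF onC] by (simp add: cmod_power2)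
  then have "cmod (w / (H s - of_real x)\<^sup>2) = 1 / h"
    using v \<open>v = w\<close> ImH[of s] by (simp add: norm_divide norm_power)
  then show "\<bar>Re (w / (H s - of_real x)\<^sup>2)\<bar> = 1 / h"
    using Im0 by (simp add: cmod_def)
qed

text \<open>In the coordinate \<open>-1/(z - x)\<close> the horocycle is the line \<open>Im = 1/h\<close>, on which
  hyperbolic arc length is \<open>h\<close> times Euclidean length.\<close>
lemma horocycle_arclength_inversion_affine:
  assumes h: "h > 0" and H: "arclength_param (horocycle x h) H"
  obtains \<sigma> :: real where "\<sigma> = 1 \<or> \<sigma> = -1"
    "\<And>s w. (H has_vector_derivative w) (at s) \<Longrightarrow> w / (H s - of_real x)\<^sup>2 = of_real (\<sigma> / h)"
    "\<And>s. Re (- 1 / (H s - of_real x)) = Re (- 1 / (H 0 - of_real x)) + \<sigma> / h * s"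
proof -
  obtain V where V: "\<And>s. (H has_vector_derivative V s) (at s)"
    using H unfolding arclength_param_def by metis
  have Hx: "H s \<noteq> of_real x" for s
    using horocycle_Im_pos[OF arclength_param_mem[OF H]] by (metis Im_complex_of_real less_irrefl)
  define f f' where "f s = Re (- 1 / (H s - of_real x))"
    and "f' s = Re (V s / (H s - of_real x)\<^sup>2)" for s
  have df: "\<And>s. DERIV f s :> f' s" unfolding f_def f'_def
    by (rule has_real_derivative_Re[OF has_vector_derivative_inversion[OF V Hx]])
  have pm: "f' s = 1/h \<or> f' s = - (1/h)" for s
    using horocycle_arclength_inversion_derivative(2)[OF h H V, of s] unfolding f'_def
    by (auto simp: abs_if split: if_splits)
  have "(\<forall>s. f' s = 1/h) \<or> (\<forall>s. f' s = - (1/h))"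
    using derivative_pm_constant[OF df _ pm] h by simp
  then obtain \<sigma> where \<sigma>: "\<sigma> = 1 \<or> \<sigma> = -1" and f': "\<And>s. f' s = \<sigma> / h"
    by (auto intro: that[of 1] that[of "-1"])
  show thesis
  proof (rule that[OF \<sigma>])
    fix s w assume w: "(H has_vector_derivative w) (at s)"
    have "w = V s" using vector_derivative_unique_at[OF w V] .
    show "w / (H s - of_real x)\<^sup>2 = of_real (\<sigma> / h)"
      unfolding \<open>w = V s\<close> using f'[of s] horocycle_arclength_inversion_derivative(1)[OF h H V]
      by (simp add: f'_def complex_eq_iff)
  next
    fix s
    have "DERIV (\<lambda>s. f s - \<sigma> / h * s) t :> 0" for t
      using DERIV_diff[OF df DERIV_cmult_Id[of "\<sigma> / h" t]] f'[of t] by simp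
    from DERIV_isconst_all[OF allI[OF this], of s 0]
    show "Re (- 1 / (H s - of_real x)) = Re (- 1 / (H 0 - of_real x)) + \<sigma> / h * s"
      by (simp add: f_def)
  qed
qed

lemma shift_param_horocycle:
  assumes h: "h > 0"
    and p: "\<And>z. Im z > 0 \<Longrightarrow> moeb p z = parabolic_map x c z"
    and sp: "shift_param (horocycle x h) p l H"
  obtains \<sigma> :: real where "\<sigma> = 1 \<or> \<sigma> = -1" "\<sigma> * l = - c * h"
    "\<And>s w. (H has_vector_derivative w) (at s) \<Longrightarrow> w / (H s - of_real x)\<^sup>2 = of_real (\<sigma> / h)"
proof -
  have H: "arclength_param (horocycle x h) H" and shift: "\<And>s. moeb p (H s) = H (s + l)"
    using sp by (simp_all add: shift_param_def)
  obtain \<sigma> where \<sigma>: "\<sigma> = 1 \<or> \<sigma> = -1"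
    and dH: "\<And>s w. (H has_vector_derivative w) (at s) \<Longrightarrow> w / (H s - of_real x)\<^sup>2 = of_real (\<sigma> / h)"
    and affine: "\<And>s. Re (- 1 / (H s - of_real x)) = Re (- 1 / (H 0 - of_real x)) + \<sigma> / h * s"
    using horocycle_arclength_inversion_affine[OF h H] by blast
  have "Im (H 0) > 0" using horocycle_Im_pos[OF arclength_param_mem[OF H]] .
  then have "Re (- 1 / (H l - of_real x)) = Re (- 1 / (H 0 - of_real x)) - c"
    using inversion_parabolic_map[of "H 0" x c] shift[of 0] p by simp
  then have "\<sigma> / h * l = - c" using affine[of l] by linarith
  then have "\<sigma> * l = - c * h" using h by (simp add: field_simps)
  then show thesis using that \<sigma> dH by blast
qed

lemma shift_param_reverse:
  assumes "shift_param C p l H"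
  shows "shift_param C p (- l) (\<lambda>s. H (- s))"
proof -
  have bij: "bij_betw H UNIV C" and arc: "\<forall>s. \<exists>v. (H has_vector_derivative v) (at s) \<and> cmod v = Im (H s)"
    and shift: "\<forall>s. moeb p (H s) = H (s + l)"
    using assms by (simp_all add: shift_param_def arclength_param_def)
  have "bij_betw (H \<circ> uminus) UNIV C"
    by (rule bij_betw_trans[OF _ bij]) (simp add: bij_uminus)
  moreover have "\<exists>v. ((\<lambda>s. H (- s)) has_vector_derivative v) (at s) \<and> cmod v = Im (H (- s))" for s
  proof -
    obtain v where v: "(H has_vector_derivative v) (at (- s))" "cmod v = Im (H (- s))"
      using arc by blast
    have "((\<lambda>s. - s) has_real_derivative - 1) (at s)" by (rule DERIV_minus[OF DERIV_ident])
    then have "(uminus has_vector_derivative (-1::real)) (at s)"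
      by (simp add: has_real_derivative_iff_has_vector_derivative)
    from vector_diff_chain_at[OF this] v(1)
    have "((\<lambda>s. H (- s)) has_vector_derivative - v) (at s)" by (simp add: o_def)
    then show ?thesis using v(2) by auto
  qed
  moreover have "\<forall>s. moeb p (H (- s)) = H (- (s + - l))"
    using shift by (simp add: algebra_simps)
  ultimately show ?thesis by (simp add: shift_param_def arclength_param_def o_def)
qed

lemma horo_length_horocycle:
  assumes h: "h > 0"
    and p: "\<And>z. Im z > 0 \<Longrightarrow> moeb p z = parabolic_map x c z"
    and sp: "shift_param (horocycle x h) p l H"
  shows "horo_length (horocycle x h) p = \<bar>c * h\<bar>"
  unfolding horo_length_def
proof (rule the_equality)
  have abs_l: "\<bar>l'\<bar> = \<bar>c * h\<bar>" if sp': "shift_param (horocycle x h) p l' H'" for l' H'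
  proof -
    obtain \<sigma> where "\<sigma> = 1 \<or> \<sigma> = -1" "\<sigma> * l' = - c * h"
      using shift_param_horocycle[OF h p sp'] by blast
    then show ?thesis by auto
  qed
  show "\<bar>c * h\<bar> \<ge> 0 \<and> (\<exists>H. shift_param (horocycle x h) p \<bar>c * h\<bar> H)"
  proof (cases "l \<ge> 0")
    case True
    then show ?thesis using abs_l[OF sp] sp by auto
  next
    case False
    then show ?thesis using abs_l[OF sp] shift_param_reverse[OF sp] by auto
  qed
  show "l' = \<bar>c * h\<bar>" if "l' \<ge> 0 \<and> (\<exists>H. shift_param (horocycle x h) p l' H)" for l'
    using that abs_l by fastforce
qed

lemma u_lift_has_vector_derivative: "(u_lift has_vector_derivative u_lift t) (at t)"
  unfolding u_lift_def[abs_def]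
  by (rule has_vector_derivative_mult_right[OF has_vector_derivative_of_real[OF DERIV_exp]])

lemma inversion_derivative_vertical:
  fixes x y :: real
  assumes x: "x > 0" and y: "y > 0"
    and real: "Im (\<i> * of_real y / (\<i> * of_real y - of_real x)\<^sup>2) = 0"
  shows "x = y" "Re (\<i> * of_real y / (\<i> * of_real y - of_real x)\<^sup>2) = - 1 / (2 * x)"
proof -
  define Q where "Q = (x\<^sup>2 - y\<^sup>2)\<^sup>2 + (2*x*y)\<^sup>2"
  have Q: "Q > 0" unfolding Q_def using x y by (simp add: add_nonneg_pos)
  have sq: "(\<i> * of_real y - of_real x)\<^sup>2 = Complex (x\<^sup>2 - y\<^sup>2) (- 2*x*y)"
    by (simp add: complex_eq_iff power2_eq_square algebra_simps)
  have "y * (x\<^sup>2 - y\<^sup>2) / Q = 0"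
    using real unfolding sq Q_def by (simp add: Im_divide power2_eq_square algebra_simps)
  then have "x\<^sup>2 = y\<^sup>2" using y Q by simp
  then show xy: "x = y" using x y by (auto simp: power2_eq_iff)
  have "Re (\<i> * of_real y / (\<i> * of_real y - of_real x)\<^sup>2) = - 2*x*y\<^sup>2 / Q"
    unfolding sq Q_def by (simp add: Re_divide power2_eq_square algebra_simps)
  also have "\<dots> = - 1 / (2 * x)"
    using xy x unfolding Q_def by (simp add: power2_eq_square field_simps)
  finally show "Re (\<i> * of_real y / (\<i> * of_real y - of_real x)\<^sup>2) = - 1 / (2 * x)" .
qed

text \<open>At the tangency point the geodesic and the horocycle pass through \<open>i y\<close> with velocity
  \<open>i y\<close>; the derivative of \<open>-1/(z - x)\<close> along the horocycle is real only when \<open>x = y\<close>, and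
  it is then negative, which forces the orientation and the sign of \<open>c\<close>.\<close>
lemma tangent_at_horocycle:
  assumes h: "h > 0" and x: "x > 0" and c: "c \<noteq> 0"
    and p: "\<And>z. Im z > 0 \<Longrightarrow> moeb p z = parabolic_map x c z"
    and tg: "tangent_at t (horocycle x h) p"
  shows "x = exp t" "h = 2 * x" "c > 0" "horo_length (horocycle x h) p = c * h"
proof -
  let ?L = "horo_length (horocycle x h) p"
  define y where "y = exp t"
  obtain H s0 v where sp: "shift_param (horocycle x h) p ?L H" and Hs0: "H s0 = u_lift t"
    and du: "(u_lift has_vector_derivative v) (at t)" and dH: "(H has_vector_derivative v) (at s0)"
    using tg unfolding tangent_at_def by blast
  have Hy: "H s0 = \<i> * of_real y" and vy: "v = \<i> * of_real y"
    using Hs0 vector_derivative_unique_at[OF du u_lift_has_vector_derivative]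
    by (simp_all add: u_lift_def y_def)
  obtain \<sigma> where \<sigma>: "\<sigma> = 1 \<or> \<sigma> = -1" "\<sigma> * ?L = - c * h"
    and dH_inv: "\<And>s w. (H has_vector_derivative w) (at s) \<Longrightarrow> w / (H s - of_real x)\<^sup>2 = of_real (\<sigma> / h)"
    using shift_param_horocycle[OF h p sp] by blast
  have real: "\<i> * of_real y / (\<i> * of_real y - of_real x)\<^sup>2 = of_real (\<sigma> / h)"
    using dH_inv[OF dH] by (simp add: Hy vy)
  have "y > 0" by (simp add: y_def)
  note vertical = inversion_derivative_vertical[OF x this]
  have xy: "x = y" using vertical(1) real by simp
  then show "x = exp t" by (simp add: y_def)
  have "H s0 \<in> horocycle x h"
    using sp arclength_param_mem by (simp add: shift_param_def)
  then show h2: "h = 2 * x"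
    using horocycle_circle_eq[of "H s0" x h] Hy xy x by (simp add: power2_eq_square)
  have "\<sigma> / h = - 1 / h" using vertical(2) real h2 xy by simp
  then have "\<sigma> = -1" using h by (simp add: field_simps)
  then show L: "?L = c * h" using \<sigma> by simp
  moreover have "?L = \<bar>c * h\<bar>" by (rule horo_length_horocycle[OF h p sp])
  ultimately have "0 \<le> c * h" by (metis abs_ge_zero)
  then show "c > 0" using c h by (simp add: zero_le_mult_iff)
qed

lemma tangent_parabolic_data:
  assumes par: "parabolic p" and fx: "fixes_real p x" and x: "x > 0" and h: "h > 0"
    and tg: "tangent_at t (horocycle x h) p"
  obtains c where "c > 0" "1 \<le> x" "horo_length (horocycle x h) p = 2 * c * x"
    "\<And>z. Im z > 0 \<Longrightarrow> moeb (matrix_inv p) z = parabolic_map x (- c) z"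
proof -
  obtain c where c: "c \<noteq> 0" and pc: "\<And>z. Im z > 0 \<Longrightarrow> moeb p z = parabolic_map x c z"
    and inv: "\<And>z. Im z > 0 \<Longrightarrow> moeb (adj2 p) z = parabolic_map x (- c) z"
    using parabolic_normal_form[OF par fx] by blast
  note tangent = tangent_at_horocycle[OF h x c pc tg]
  have "t \<ge> 0" using tg by (simp add: tangent_at_def)
  then have "1 \<le> x" using tangent(1) by simp
  moreover have "matrix_inv p = adj2 p"
    using par by (simp add: parabolic_def matrix_inv_eq_adj2)
  ultimately show thesis
    using that[of c] tangent inv by simp
qed

section \<open>Heights along the orbit\<close>

lemma strip_inequality:
  fixes x y b c :: real
  assumes x: "1 \<le> x" and c: "0 < c" and y: "0 \<le> y" "y \<le> x" and b: "0 < b" "b \<le> 1"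
  shows "y + c * (y\<^sup>2 + b\<^sup>2) \<le> x * ((1 + c*y)\<^sup>2 + c\<^sup>2 * b\<^sup>2)"
proof -
  have "x * ((1 + c*y)\<^sup>2 + c\<^sup>2 * b\<^sup>2) - y - c * (y\<^sup>2 + b\<^sup>2)
      = (x - y) + c * (2*x*y - y\<^sup>2 - b\<^sup>2) + c\<^sup>2 * x * (y\<^sup>2 + b\<^sup>2)"
    by (simp add: power2_eq_square algebra_simps)
  moreover have "c * (2*x*y - y\<^sup>2 - b\<^sup>2) \<ge> c * (x*y - b\<^sup>2)"
    using c y by (intro mult_left_mono) (auto simp: power2_eq_square mult_right_mono)
  moreover have "c\<^sup>2 * x * (y\<^sup>2 + b\<^sup>2) \<ge> c\<^sup>2 * x * b\<^sup>2"
    using x by (simp add: algebra_simps)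
  moreover have "(x - y) + c * (x*y - b\<^sup>2) + c\<^sup>2 * x * b\<^sup>2 \<ge> 0"
  proof (cases "c * x \<ge> 1")
    case True
    then have "c * b\<^sup>2 * (c * x - 1) \<ge> 0" using c by simp
    moreover have "(x - y) + c * x * y \<ge> 0" using y c x by simp
    ultimately show ?thesis by (simp add: algebra_simps power2_eq_square)
  next
    case False
    then have "y * (1 - c*x) \<le> x * (1 - c*x)" using y by (intro mult_right_mono) auto
    moreover have "c * b\<^sup>2 \<le> c * x\<^sup>2"
      using c b x by (intro mult_left_mono power_mono) auto
    moreover have "c\<^sup>2 * x * b\<^sup>2 \<ge> 0" using x by simp
    ultimately show ?thesis by (simp add: algebra_simps power2_eq_square)
  qed
  ultimately show ?thesis by linarith
qed

text \<open>Writing \<open>z' = parabolic_map x (-c) z\<close>, one has \<open>Im z' = Im z / N\<close> with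
  \<open>N = |1 + c (x - z)|\<^sup>2\<close>, and on the region \<open>0 \<le> Re z \<le> x\<close>, \<open>Im z \<le> 1 \<le> x\<close> this \<open>N\<close>
  lies between \<open>1\<close> and \<open>(1 + cx)\<^sup>2 + (cx)\<^sup>2 \<le> exp (2cx)\<close>.\<close>
lemma parabolic_map_strip_step:
  assumes x: "1 \<le> x" and c: "0 < c" and re: "0 \<le> Re z" "Re z \<le> x" and im: "0 < Im z" "Im z \<le> 1"
  defines "z' \<equiv> parabolic_map x (- c) z"
  shows "0 \<le> Re z'" "Re z' \<le> x" "0 < Im z'" "Im z' \<le> Im z" "- ln (Im z') \<le> - ln (Im z) + 2 * c * x"
proof -
  define y b where "y = x - Re z" and "b = Im z"
  define N where "N = (1 + c*y)\<^sup>2 + c\<^sup>2 * b\<^sup>2"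
  have y: "0 \<le> y" "y \<le> x" and b: "0 < b" "b \<le> 1" using re im by (auto simp: y_def b_def)
  have Re': "Re z' = x + (- y - c * (y\<^sup>2 + b\<^sup>2)) / N"
    unfolding z'_def parabolic_map_def N_def y_def b_def
    by (simp add: Re_divide power2_eq_square algebra_simps)
  have Im': "Im z' = b / N"
    unfolding z'_def parabolic_map_def N_def y_def b_def
    by (simp add: Im_divide power2_eq_square algebra_simps)
  have "1 \<le> (1 + c*y)\<^sup>2" using y c by (intro one_le_power) simp
  moreover have "0 \<le> c\<^sup>2 * b\<^sup>2" by simp
  ultimately have N1: "1 \<le> N" unfolding N_def by linarith
  have "y + c * (y\<^sup>2 + b\<^sup>2) \<le> x * N"
    unfolding N_def by (rule strip_inequality[OF x c y b])
  then show "0 \<le> Re z'" unfolding Re' using N1 by (simp add: field_simps)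
  have "0 \<le> y + c * (y\<^sup>2 + b\<^sup>2)" using y c by simp
  then show "Re z' \<le> x" unfolding Re' using N1 by (simp add: divide_nonpos_pos)
  show "0 < Im z'" unfolding Im' using N1 b by simp
  show "Im z' \<le> Im z" unfolding Im' b_def[symmetric] using N1 b by (simp add: divide_le_eq)
  have "N \<le> 1 + 2*c*x + (2*c*x)\<^sup>2 / 2"
  proof -
    have "(1 + c*y)\<^sup>2 \<le> (1 + c*x)\<^sup>2" using c y by (intro power_mono) (auto intro: mult_left_mono)
    moreover have "c\<^sup>2 * b\<^sup>2 \<le> c\<^sup>2 * x\<^sup>2" using b x by (intro mult_left_mono power_mono) auto
    ultimately show ?thesis unfolding N_def by (simp add: power2_eq_square algebra_simps)
  qed
  also have "\<dots> \<le> exp (2*c*x)" using exp_lower_Taylor_quadratic[of "2*c*x"] c x by simp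
  finally have "ln N \<le> 2*c*x" using N1 ln_le_cancel_iff[of N "exp (2*c*x)"] by simp
  then show "- ln (Im z') \<le> - ln (Im z) + 2 * c * x"
    unfolding Im' b_def[symmetric] using N1 b by (simp add: ln_div)
qed

lemma parabolic_orbit_height:
  fixes X c :: "nat \<Rightarrow> real" and w :: "nat \<Rightarrow> complex"
  assumes X: "mono X" "1 \<le> X 0" and c: "\<And>n. 0 < c n"
    and w0: "w 0 = parabolic_map (X 0) (- c 0) \<i>"
    and wS: "\<And>n. w (Suc n) = parabolic_map (X (Suc n)) (- c (Suc n)) (w n)"
  shows "incseq (\<lambda>n. - ln (Im (w n)))"
    and "0 \<le> - ln (Im (w n))" "- ln (Im (w n)) \<le> (\<Sum>j\<le>n. 2 * c j * X j)"
proof -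
  have X1: "1 \<le> X n" for n using X monoD[OF X(1), of 0 n] by simp
  have strip: "0 \<le> Re (w n) \<and> Re (w n) \<le> X n \<and> 0 < Im (w n) \<and> Im (w n) \<le> 1" for n
  proof (induction n)
    case 0
    show ?case using parabolic_map_strip_step[OF X1[of 0] c[of 0], of \<i>] X1[of 0] w0 by simp
  next
    case (Suc n)
    then have "Re (w n) \<le> X (Suc n)" using monoD[OF X(1), of n "Suc n"] by simp
    then show ?case
      using parabolic_map_strip_step[OF X1[of "Suc n"] c[of "Suc n"], of "w n"] Suc wS[of n] by force
  qed
  have step: "- ln (Im (w n)) \<le> - ln (Im (w (Suc n)))"
    "- ln (Im (w (Suc n))) \<le> - ln (Im (w n)) + 2 * c (Suc n) * X (Suc n)" for n
    using parabolic_map_strip_step[OF X1[of "Suc n"] c[of "Suc n"], of "w n"] strip[of n]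
      monoD[OF X(1), of n "Suc n"] wS[of n] by auto
  show "incseq (\<lambda>n. - ln (Im (w n)))" using step(1) by (rule incseq_SucI)
  show "0 \<le> - ln (Im (w n))" using strip[of n] by simp
  show "- ln (Im (w n)) \<le> (\<Sum>j\<le>n. 2 * c j * X j)"
  proof (induction n)
    case 0
    show ?case using parabolic_map_strip_step[OF X1[of 0] c[of 0], of \<i>] X1[of 0] w0 by simp
  next
    case (Suc n)
    then show ?case using step(2)[of n] by simp
  qed
qed

section \<open>The Busemann function at infinity\<close>

lemma hdist_vertical_ray_asymp:
  assumes "Im z > 0"
  shows "((\<lambda>t. hdist z (\<i> * of_real (exp t)) - t) \<longlongrightarrow> - ln (Im z)) at_top"
proof -
  define a b where "a = Re z" and "b = Im z"
  have b: "b > 0" using assms by (simp add: b_def)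
  txt \<open>With \<open>u = exp (-t)\<close> the difference becomes \<open>F u\<close>, continuous at \<open>u = 0\<close>.\<close>
  define Y where "Y u = u + (a\<^sup>2 * u\<^sup>2 + (b * u - 1)\<^sup>2) / (2 * b)" for u :: real
  define F where "F u = ln (Y u + sqrt ((Y u)\<^sup>2 - u\<^sup>2))" for u
  have eq: "hdist z (\<i> * of_real (exp t)) - t = F (exp (- t))" for t
  proof -
    define e where "e = exp t"
    have e: "e > 0" by (simp add: e_def)
    define X where "X = 1 + (a\<^sup>2 + (b - e)\<^sup>2) / (2 * b * e)"
    have X1: "X \<ge> 1" unfolding X_def using b e by simp
    have hd: "hdist z (\<i> * of_real e) = ln (X + sqrt (X\<^sup>2 - 1))"
      using X1 unfolding hdist_def arcosh_def X_def
      by (simp add: cmod_power2 powr_half_sqrt a_def b_def)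
    have Yu: "Y (1 / e) = X / e"
      unfolding Y_def X_def using e b by (simp add: field_simps power2_eq_square)
    have "(Y (1/e))\<^sup>2 - (1/e)\<^sup>2 = (X\<^sup>2 - 1) / e\<^sup>2"
      unfolding Yu by (simp add: power_divide diff_divide_distrib)
    then have sq: "sqrt ((Y (1/e))\<^sup>2 - (1/e)\<^sup>2) = sqrt (X\<^sup>2 - 1) / e"
      using e by (simp add: real_sqrt_divide)
    have "0 \<le> sqrt (X\<^sup>2 - 1)" using X1 by (simp add: one_le_power)
    then have pos: "X + sqrt (X\<^sup>2 - 1) > 0" using X1 by linarith
    have "F (exp (- t)) = ln ((X + sqrt (X\<^sup>2 - 1)) / e)"
      using Yu sq by (simp add: F_def e_def exp_minus inverse_eq_divide add_divide_distrib)
    also have "\<dots> = ln (X + sqrt (X\<^sup>2 - 1)) - t"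
      using pos e by (simp add: ln_div e_def)
    finally show ?thesis using hd by (simp add: e_def)
  qed
  have F0: "F 0 = - ln b"
    using b by (simp add: F_def Y_def real_sqrt_divide ln_div)
  have "isCont F 0"
    using b unfolding F_def Y_def by (auto intro!: continuous_intros)
  moreover have "((\<lambda>t. exp (- t)) \<longlongrightarrow> (0::real)) at_top"
    by (rule filterlim_compose[OF exp_at_bot filterlim_uminus_at_bot_at_top])
  ultimately have "((\<lambda>t. F (exp (- t))) \<longlongrightarrow> F 0) at_top"
    by (rule isCont_tendsto_compose)
  then show ?thesis unfolding eq F0 b_def .
qed

lemma busemann_inf_i:
  assumes "Im z > 0"
  shows "busemann_inf z \<i> = - ln (Im z)"
proof -
  have "((\<lambda>t. (hdist z (\<i> * of_real (exp t)) - t) - (hdist \<i> (\<i> * of_real (exp t)) - t))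
          \<longlongrightarrow> - ln (Im z) - (- ln (Im \<i>))) at_top"
    by (intro tendsto_diff hdist_vertical_ray_asymp assms) simp
  then show ?thesis
    unfolding busemann_inf_def by (intro tendsto_Lim) simp_all
qed

lemma incseq_bounded_convergent:
  fixes r :: "nat \<Rightarrow> real"
  assumes "incseq r" "\<And>n. 0 \<le> r n" "\<And>n. r n \<le> B"
  shows "\<exists>L. r \<longlonglongrightarrow> L \<and> (\<forall>n. \<bar>r n\<bar> \<le> B) \<and> \<bar>L\<bar> \<le> B"
proof -
  have "bdd_above (range r)" unfolding bdd_above_def using assms(3) by blast
  then have lim: "r \<longlonglongrightarrow> (SUP n. r n)" using assms(1) by (rule LIMSEQ_incseq_SUP)
  moreover have "0 \<le> (SUP n. r n)" using LIMSEQ_le_const[OF lim] assms(2) by blast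
  moreover have "(SUP n. r n) \<le> B" using LIMSEQ_le_const2[OF lim] assms(3) by blast
  ultimately show ?thesis using assms(2,3) by auto
qed

theorem mainTheorem8:
  fixes G :: "mat2 set"
    and p :: "nat \<Rightarrow> mat2" and x :: "nat \<Rightarrow> real" and h :: "nat \<Rightarrow> real"
    and t :: "nat \<Rightarrow> real" and k :: "nat \<Rightarrow> nat"
  assumes Gamma: "torsion_free_fuchsian G"
    and cusp: "\<exists>A\<in>G. parabolic A"
    and p_in: "\<And>n. p n \<in> G"
    and p_par: "\<And>n. parabolic (p n)"
    and p_fix: "\<And>n. fixes_real (p n) (x n)"
    and h_pos: "\<And>n. h n > 0"
    and p_pres: "\<And>n. moeb (p n) ` horocycle (x n) (h n) = horocycle (x n) (h n)"
    and tang: "\<And>n. tangent_at (t n) (horocycle (x n) (h n)) (p n)"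
    and t_nonneg: "\<And>n. t n \<ge> 0"
    and t_inc: "incseq t"
    and t_lim: "filterlim t at_top sequentially"
    and x_pos: "\<And>n. x n > 0"
    and x_inc: "strict_mono x"
    and x_lim: "filterlim x at_top sequentially"
    and disj: "\<And>m n. m \<noteq> n \<Longrightarrow> horoball (x m) (h m) \<inter> horoball (x n) (h n) = {}"
    and ell_lim: "(\<lambda>n. horo_length (horocycle (x n) (h n)) (p n)) \<longlonglongrightarrow> 0"
    and k_sub: "strict_mono k"
    and summ: "summable (\<lambda>n. horo_length (horocycle (x (k n)) (h (k n))) (p (k n)))"
  shows "\<exists>r_alpha::real.
     (\<lambda>n. busemann_inf (moeb (matrix_inv (mprod_upto (\<lambda>j. p (k j)) n)) \<i>) \<i>) \<longlonglongrightarrow> r_alpha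
     \<and> (\<forall>n. \<bar>busemann_inf (moeb (matrix_inv (mprod_upto (\<lambda>j. p (k j)) n)) \<i>) \<i>\<bar>
            \<le> (\<Sum>i. horo_length (horocycle (x (k i)) (h (k i))) (p (k i))))
     \<and> \<bar>r_alpha\<bar> \<le> (\<Sum>i. horo_length (horocycle (x (k i)) (h (k i))) (p (k i)))"
proof -
  have "\<forall>n. \<exists>c. c > 0 \<and> 1 \<le> x n \<and> horo_length (horocycle (x n) (h n)) (p n) = 2 * c * x n
          \<and> (\<forall>z. Im z > 0 \<longrightarrow> moeb (matrix_inv (p n)) z = parabolic_map (x n) (- c) z)"
    using tangent_parabolic_data[OF p_par p_fix x_pos h_pos tang] by blast
  then obtain c where c: "\<And>n. c n > 0" and x1: "\<And>n. 1 \<le> x n"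
    and ell: "\<And>n. horo_length (horocycle (x n) (h n)) (p n) = 2 * c n * x n"
    and inv: "\<And>n z. Im z > 0 \<Longrightarrow> moeb (matrix_inv (p n)) z = parabolic_map (x n) (- c n) z"
    by metis
  define w where "w n = moeb (matrix_inv (mprod_upto (\<lambda>j. p (k j)) n)) \<i>" for n
  have "det (p n) = 1" for n using p_par by (simp add: parabolic_def)
  note orbit = moeb_inv_mprod_upto[of "\<lambda>j. p (k j)" \<i>, OF this, folded w_def]
  have wS: "w (Suc n) = parabolic_map (x (k (Suc n))) (- c (k (Suc n))) (w n)" for n
    using orbit by (simp add: inv)
  have w0: "w 0 = parabolic_map (x (k 0)) (- c (k 0)) \<i>" by (simp add: w_def inv)
  have "mono (\<lambda>n. x (k n))"
    using strict_mono_mono[OF strict_mono_o[OF x_inc k_sub]] by (simp add: o_def)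
  note height = parabolic_orbit_height[OF this x1 c w0 wS]
  have "0 \<le> c n * x n" for n
    using c[of n] x1[of n] by (intro mult_nonneg_nonneg) auto
  then have "(\<Sum>j\<le>n. 2 * c (k j) * x (k j)) \<le> (\<Sum>i. horo_length (horocycle (x (k i)) (h (k i))) (p (k i)))" for n
    using sum_le_suminf[OF summ, of "{..n}"] by (simp add: ell)
  then have "\<exists>L. (\<lambda>n. - ln (Im (w n))) \<longlonglongrightarrow> L
      \<and> (\<forall>n. \<bar>- ln (Im (w n))\<bar> \<le> (\<Sum>i. horo_length (horocycle (x (k i)) (h (k i))) (p (k i))))
      \<and> \<bar>L\<bar> \<le> (\<Sum>i. horo_length (horocycle (x (k i)) (h (k i))) (p (k i)))"
    using height by (intro incseq_bounded_convergent) (auto intro: order_trans)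
  then show ?thesis
    using orbit(1) by (simp add: busemann_inf_i flip: w_def)
qed

end
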